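(* Let $(X,Y,\phi)$ be an $L$-context and $X'\subseteq X$, $Y'\subseteq Y$, and let $S_1,S_2\colon\mathcal{K}\phi\to\mathcal{K}\phi_{X',Y'}$ and $F_1,F_2\colon\mathcal{K}\phi_{X',Y'}\to\mathcal{K}\phi$ be the maps $S_1\mu=(\phi_{X',Y'})^\forall(\phi_{X',Y'})^\exists\mu_{X'}$, $S_2\mu=\big((\phi_{X,Y'})^\forall(\phi_{X,Y'})^\exists\mu\big)_{X'}$, $F_1\mu'=\phi^\forall\phi^\exists\underline{\mu'}$, $F_2\mu'=(\phi_{X,Y'})^\forall(\phi_{X,Y'})^\exists\underline{\mu'}$. Then: (1) $(F_1\mu')_{X'}=(F_2\mu')_{X'}$ for all $\mu'\in\mathcal{K}\phi_{X',Y'}$; (2) each of the composites $S_1F_1$, $S_1F_2$, $S_2F_1$, $S_2F_2$ equals the identity map of $\mathcal{K}\phi_{X',Y'}$.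
   Context: $L=(L,* )$ is a complete residuated lattice: a complete lattice with bottom $0$ and top $1$, equipped with a commutative associative operation $*$ with unit $1$ satisfying $a*\bigvee_i b_i=\bigvee_i a*b_i$; $\to$ is its residuum ($a*b\le c\iff a\le b\to c$). An $L$-context is a triple $(X,Y,\phi)$ with $X,Y$ sets and $\phi\colon X\times Y\to L$. $L^X$ is the set of maps $X\to L$ with $L$-order $L^X(\mu,\mu')=\bigwedge_{x}(\mu(x)\to\mu'(x))$. $(\phi^\exists\mu)(y)=\bigvee_{x\in X}\mu(x)*\phi(x,y)$ for $\mu\in L^X$, and $(\phi^\forall\lambda)(x)=\bigwedge_{y\in Y}(\phi(x,y)\to\lambda(y))$ for $\lambda\in L^Y$. $\mathcal{K}\phi=\{\mu\in L^X\mid\phi^\forall\phi^\exists\mu=\mu\}$. For $X'\subseteq X$, $Y'\subseteq Y$, $\phi_{X',Y'}$ is the restriction of $\phi$ to $X'\times Y'$ (an $L$-context $(X',Y',\phi_{X',Y'})$); $\mu_{X'}$ is the restriction of $\mu\in L^X$ to $X'$; for $\mu'\in L^{X'}$, $\underline{\mu'}\in L^X$ is the extension of $\mu'$ by $0$ outside $X'$. (The maps $S_i,F_i$ are well defined with the stated domains and codomains.) *)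

theory Defs
  imports Main
begin

definition complete_residuated_lattice ::
  "('l::complete_lattice \<Rightarrow> 'l \<Rightarrow> 'l) \<Rightarrow> ('l \<Rightarrow> 'l \<Rightarrow> 'l) \<Rightarrow> bool" where
  "complete_residuated_lattice mul res \<longleftrightarrow>
     (\<forall>a b. mul a b = mul b a) \<and>
     (\<forall>a b c. mul (mul a b) c = mul a (mul b c)) \<and>
     (\<forall>a. mul a top = a) \<and>
     (\<forall>a B. mul a (Sup B) = Sup (mul a ` B)) \<and>
     (\<forall>a b c. mul a b \<le> c \<longleftrightarrow> a \<le> res b c)"

text \<open>Elements of L^X are represented as functions that are 0 (bot) outside X.\<close>
definition Lset :: "'x set \<Rightarrow> ('x \<Rightarrow> 'l::complete_lattice) set" where
  "Lset X = {\<mu>. \<forall>x. x \<notin> X \<longrightarrow> \<mu> x = bot}"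

definition restr :: "'x set \<Rightarrow> ('x \<Rightarrow> 'l::complete_lattice) \<Rightarrow> ('x \<Rightarrow> 'l)" where
  "restr X' \<mu> = (\<lambda>x. if x \<in> X' then \<mu> x else bot)"

definition ext0 :: "'x set \<Rightarrow> ('x \<Rightarrow> 'l::complete_lattice) \<Rightarrow> ('x \<Rightarrow> 'l)" where
  "ext0 X' \<mu>' = (\<lambda>x. if x \<in> X' then \<mu>' x else bot)"

text \<open>phi^exists for the context (X, Y, phi restricted to X \<times> Y).\<close>
definition up_ex ::
  "('l::complete_lattice \<Rightarrow> 'l \<Rightarrow> 'l) \<Rightarrow> 'x set \<Rightarrow> 'y set \<Rightarrow> ('x \<Rightarrow> 'y \<Rightarrow> 'l)
     \<Rightarrow> ('x \<Rightarrow> 'l) \<Rightarrow> ('y \<Rightarrow> 'l)" where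
  "up_ex mul X Y \<phi> \<mu> = (\<lambda>y. if y \<in> Y then (SUP x\<in>X. mul (\<mu> x) (\<phi> x y)) else bot)"

definition down_all ::
  "('l::complete_lattice \<Rightarrow> 'l \<Rightarrow> 'l) \<Rightarrow> 'x set \<Rightarrow> 'y set \<Rightarrow> ('x \<Rightarrow> 'y \<Rightarrow> 'l)
     \<Rightarrow> ('y \<Rightarrow> 'l) \<Rightarrow> ('x \<Rightarrow> 'l)" where
  "down_all res X Y \<phi> lam = (\<lambda>x. if x \<in> X then (INF y\<in>Y. res (\<phi> x y) (lam y)) else bot)"

definition clo ::
  "('l::complete_lattice \<Rightarrow> 'l \<Rightarrow> 'l) \<Rightarrow> ('l \<Rightarrow> 'l \<Rightarrow> 'l) \<Rightarrow> 'x set \<Rightarrow> 'y set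
     \<Rightarrow> ('x \<Rightarrow> 'y \<Rightarrow> 'l) \<Rightarrow> ('x \<Rightarrow> 'l) \<Rightarrow> ('x \<Rightarrow> 'l)" where
  "clo mul res X Y \<phi> \<mu> = down_all res X Y \<phi> (up_ex mul X Y \<phi> \<mu>)"

text \<open>K phi for the context (X, Y, phi restricted to X \<times> Y).\<close>
definition Kset ::
  "('l::complete_lattice \<Rightarrow> 'l \<Rightarrow> 'l) \<Rightarrow> ('l \<Rightarrow> 'l \<Rightarrow> 'l) \<Rightarrow> 'x set \<Rightarrow> 'y set
     \<Rightarrow> ('x \<Rightarrow> 'y \<Rightarrow> 'l) \<Rightarrow> ('x \<Rightarrow> 'l) set" where
  "Kset mul res X Y \<phi> = {\<mu> \<in> Lset X. clo mul res X Y \<phi> \<mu> = \<mu>}"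

definition S1 where "S1 mul res X Y X' Y' \<phi> \<mu> = clo mul res X' Y' \<phi> (restr X' \<mu>)"
definition S2 where "S2 mul res X Y X' Y' \<phi> \<mu> = restr X' (clo mul res X Y' \<phi> \<mu>)"
definition F1 where "F1 mul res X Y X' Y' \<phi> \<mu>' = clo mul res X Y \<phi> (ext0 X' \<mu>')"
definition F2 where "F2 mul res X Y X' Y' \<phi> \<mu>' = clo mul res X Y' \<phi> (ext0 X' \<mu>')"

end

theory Submission
  imports Defs
begin

text \<open>Extending \<open>\<mu>'\<close> by zero does not change \<open>\<phi>\<^sup>\<exists>\<close>, so \<open>F2 \<mu>'\<close> agrees on \<open>X'\<close> with the
  closure of \<open>\<mu>'\<close> in the context \<open>(X', Y')\<close>, which is \<open>\<mu>'\<close> itself. Fewer attributes give a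
  larger closure, so \<open>F1 \<mu>' \<le> F2 \<mu>'\<close>, and both lie above the zero extension of \<open>\<mu>'\<close>. Every
  \<open>f\<close> between the zero extension of \<open>\<mu>'\<close> and \<open>F2 \<mu>'\<close> therefore restricts to \<open>\<mu>'\<close> on \<open>X'\<close>,
  and, by monotonicity and idempotence, the closure in the context \<open>(X, Y')\<close> maps it onto
  \<open>F2 \<mu>'\<close>.\<close>

locale residuated_lattice =
  fixes mul res :: "'l::complete_lattice \<Rightarrow> 'l \<Rightarrow> 'l"
  assumes crl: "complete_residuated_lattice mul res"
begin

lemma mul_commute: "mul a b = mul b a"
  using crl unfolding complete_residuated_lattice_def by blast

lemma residuation: "mul a b \<le> c \<longleftrightarrow> a \<le> res b c"
  using crl unfolding complete_residuated_lattice_def by blast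

lemma mul_Sup: "mul a (Sup B) = Sup (mul a ` B)"
  using crl unfolding complete_residuated_lattice_def by blast

lemma mul_bot_left: "mul bot b = bot"
  using mul_Sup[of b "{}"] by (simp add: mul_commute)

lemma mul_mono_left:
  assumes "a \<le> b"
  shows "mul a c \<le> mul b c"
proof -
  have "mul c b = sup (mul c a) (mul c b)"
    using mul_Sup[of c "{a, b}"] assms by (simp add: sup_absorb2)
  then show ?thesis
    by (metis mul_commute sup.cobounded1)
qed

lemma res_mono_right:
  assumes "c \<le> d"
  shows "res b c \<le> res b d"
  using residuation[of "res b c" b c] residuation[of "res b c" b d] assms by auto

lemma clo_extensive:
  assumes "x \<in> X"
  shows "\<mu> x \<le> clo mul res X Y \<phi> \<mu> x"
proof -
  have "\<mu> x \<le> res (\<phi> x y) (up_ex mul X Y \<phi> \<mu> y)" if "y \<in> Y" for y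
  proof -
    have "mul (\<mu> x) (\<phi> x y) \<le> up_ex mul X Y \<phi> \<mu> y"
      using assms that by (auto simp: up_ex_def intro: SUP_upper)
    then show ?thesis
      by (simp add: residuation)
  qed
  then show ?thesis
    using assms by (auto simp: clo_def down_all_def intro!: INF_greatest)
qed

lemma clo_mono:
  assumes "\<And>x. x \<in> X \<Longrightarrow> \<mu> x \<le> \<nu> x"
  shows "clo mul res X Y \<phi> \<mu> \<le> clo mul res X Y \<phi> \<nu>"
proof -
  have "up_ex mul X Y \<phi> \<mu> y \<le> up_ex mul X Y \<phi> \<nu> y" for y
    using assms by (auto simp: up_ex_def intro!: SUP_subset_mono mul_mono_left)
  then show ?thesis
    by (auto simp: clo_def down_all_def le_fun_def
        intro!: INF_superset_mono res_mono_right)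
qed

lemma up_ex_clo: "up_ex mul X Y \<phi> (clo mul res X Y \<phi> \<mu>) = up_ex mul X Y \<phi> \<mu>"
proof (rule ext, rule antisym)
  fix y
  have "clo mul res X Y \<phi> \<mu> x \<le> res (\<phi> x y) (up_ex mul X Y \<phi> \<mu> y)"
    if "x \<in> X" "y \<in> Y" for x
    using that by (auto simp: clo_def down_all_def intro!: INF_lower)
  then have "mul (clo mul res X Y \<phi> \<mu> x) (\<phi> x y) \<le> up_ex mul X Y \<phi> \<mu> y"
    if "x \<in> X" "y \<in> Y" for x
    using that residuation by blast
  then show "up_ex mul X Y \<phi> (clo mul res X Y \<phi> \<mu>) y \<le> up_ex mul X Y \<phi> \<mu> y"
    by (auto simp: up_ex_def[of _ _ _ _ "clo mul res X Y \<phi> \<mu>"] intro!: SUP_least)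
  show "up_ex mul X Y \<phi> \<mu> y \<le> up_ex mul X Y \<phi> (clo mul res X Y \<phi> \<mu>) y"
    by (auto simp: up_ex_def intro!: SUP_subset_mono mul_mono_left clo_extensive)
qed

lemma clo_idem: "clo mul res X Y \<phi> (clo mul res X Y \<phi> \<mu>) = clo mul res X Y \<phi> \<mu>"
  by (metis clo_def up_ex_clo)

lemma clo_antimono_attributes:
  assumes "Y' \<subseteq> Y"
  shows "clo mul res X Y \<phi> \<mu> \<le> clo mul res X Y' \<phi> \<mu>"
proof (rule le_funI)
  fix x
  have "(INF y\<in>Y. res (\<phi> x y) (up_ex mul X Y \<phi> \<mu> y))
          \<le> (INF y\<in>Y'. res (\<phi> x y) (up_ex mul X Y' \<phi> \<mu> y))"
    using assms by (intro INF_superset_mono) (auto simp: up_ex_def)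
  then show "clo mul res X Y \<phi> \<mu> x \<le> clo mul res X Y' \<phi> \<mu> x"
    by (simp add: clo_def down_all_def)
qed

lemma up_ex_ext0:
  assumes "X' \<subseteq> X"
  shows "up_ex mul X Y \<phi> (ext0 X' \<mu>) = up_ex mul X' Y \<phi> \<mu>"
proof (rule ext)
  fix y
  have split: "X = X' \<union> (X - X')"
    using assms by blast
  have "(SUP x\<in>X. mul (ext0 X' \<mu> x) (\<phi> x y))
      = sup (SUP x\<in>X'. mul (ext0 X' \<mu> x) (\<phi> x y)) (SUP x\<in>X - X'. mul (ext0 X' \<mu> x) (\<phi> x y))"
    by (subst split, rule SUP_union)
  also have "(SUP x\<in>X - X'. mul (ext0 X' \<mu> x) (\<phi> x y)) = bot"
    by (simp add: ext0_def mul_bot_left)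
  also have "(SUP x\<in>X'. mul (ext0 X' \<mu> x) (\<phi> x y)) = (SUP x\<in>X'. mul (\<mu> x) (\<phi> x y))"
    by (rule SUP_cong) (auto simp: ext0_def)
  finally show "up_ex mul X Y \<phi> (ext0 X' \<mu>) y = up_ex mul X' Y \<phi> \<mu> y"
    by (simp add: up_ex_def)
qed

lemma restr_clo_ext0:
  assumes "X' \<subseteq> X"
  shows "restr X' (clo mul res X Y \<phi> (ext0 X' \<mu>)) = clo mul res X' Y \<phi> \<mu>"
  using assms by (auto simp: fun_eq_iff restr_def clo_def down_all_def up_ex_ext0)

lemma ext0_le_clo_ext0:
  assumes "X' \<subseteq> X"
  shows "ext0 X' \<mu> \<le> clo mul res X Y \<phi> (ext0 X' \<mu>)"
proof (rule le_funI)
  fix x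
  show "ext0 X' \<mu> x \<le> clo mul res X Y \<phi> (ext0 X' \<mu>) x"
  proof (cases "x \<in> X")
    case True
    then show ?thesis by (rule clo_extensive)
  next
    case False
    then show ?thesis using assms by (auto simp: ext0_def)
  qed
qed

end

lemma Kset_closed: "\<mu> \<in> Kset mul res X Y \<phi> \<Longrightarrow> clo mul res X Y \<phi> \<mu> = \<mu>"
  by (simp add: Kset_def)

lemma Kset_outside: "\<mu> \<in> Kset mul res X Y \<phi> \<Longrightarrow> x \<notin> X \<Longrightarrow> \<mu> x = bot"
  by (simp add: Kset_def Lset_def)

context residuated_lattice
begin

lemma restr_F2:
  assumes "X' \<subseteq> X" and "\<mu>' \<in> Kset mul res X' Y' \<phi>"
  shows "restr X' (F2 mul res X Y X' Y' \<phi> \<mu>') = \<mu>'"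
  using assms by (simp add: F2_def restr_clo_ext0 Kset_closed)

lemma ext0_le_F1:
  assumes "X' \<subseteq> X"
  shows "ext0 X' \<mu>' \<le> F1 mul res X Y X' Y' \<phi> \<mu>'"
  unfolding F1_def using assms by (rule ext0_le_clo_ext0)

lemma ext0_le_F2:
  assumes "X' \<subseteq> X"
  shows "ext0 X' \<mu>' \<le> F2 mul res X Y X' Y' \<phi> \<mu>'"
  unfolding F2_def using assms by (rule ext0_le_clo_ext0)

lemma F1_le_F2:
  assumes "Y' \<subseteq> Y"
  shows "F1 mul res X Y X' Y' \<phi> \<mu>' \<le> F2 mul res X Y X' Y' \<phi> \<mu>'"
  unfolding F1_def F2_def using assms by (rule clo_antimono_attributes)

lemma restr_eq_if_between_ext0_F2:
  assumes "X' \<subseteq> X" and K: "\<mu>' \<in> Kset mul res X' Y' \<phi>"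
    and lower: "ext0 X' \<mu>' \<le> f" and upper: "f \<le> F2 mul res X Y X' Y' \<phi> \<mu>'"
  shows "restr X' f = \<mu>'"
proof (rule ext)
  fix x
  show "restr X' f x = \<mu>' x"
  proof (cases "x \<in> X'")
    case True
    have "\<mu>' x \<le> f x"
      using le_funD[OF lower, of x] True by (simp add: ext0_def)
    moreover have "F2 mul res X Y X' Y' \<phi> \<mu>' x = \<mu>' x"
      using restr_F2[OF assms(1,2)] True by (metis restr_def)
    then have "f x \<le> \<mu>' x"
      using le_funD[OF upper, of x] by simp
    ultimately show ?thesis
      using True by (simp add: restr_def)
  qed (simp add: restr_def Kset_outside[OF K])
qed

lemma S1_eq_if_between_ext0_F2:
  assumes "X' \<subseteq> X" and K: "\<mu>' \<in> Kset mul res X' Y' \<phi>"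
    and "ext0 X' \<mu>' \<le> f" and "f \<le> F2 mul res X Y X' Y' \<phi> \<mu>'"
  shows "S1 mul res X Y X' Y' \<phi> f = \<mu>'"
  using restr_eq_if_between_ext0_F2[OF assms] Kset_closed[OF K] by (simp add: S1_def)

lemma S2_eq_if_between_ext0_F2:
  assumes "X' \<subseteq> X" and K: "\<mu>' \<in> Kset mul res X' Y' \<phi>"
    and lower: "ext0 X' \<mu>' \<le> f" and upper: "f \<le> F2 mul res X Y X' Y' \<phi> \<mu>'"
  shows "S2 mul res X Y X' Y' \<phi> f = \<mu>'"
proof -
  let ?F2 = "F2 mul res X Y X' Y' \<phi> \<mu>'"
  have "?F2 \<le> clo mul res X Y' \<phi> f"
    unfolding F2_def using lower by (intro clo_mono) (simp add: le_fun_def)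
  moreover have "clo mul res X Y' \<phi> f \<le> clo mul res X Y' \<phi> ?F2"
    using upper by (intro clo_mono) (simp add: le_fun_def)
  moreover have "clo mul res X Y' \<phi> ?F2 = ?F2"
    unfolding F2_def by (rule clo_idem)
  ultimately have "clo mul res X Y' \<phi> f = ?F2"
    by simp
  then show ?thesis
    using restr_F2[OF assms(1,2)] by (simp add: S2_def)
qed

end

theorem mainTheorem2:
  fixes mul res :: "'l::complete_lattice \<Rightarrow> 'l \<Rightarrow> 'l"
    and X X' :: "'x set" and Y Y' :: "'y set" and \<phi> :: "'x \<Rightarrow> 'y \<Rightarrow> 'l"
  assumes "complete_residuated_lattice mul res"
    and "X' \<subseteq> X" and "Y' \<subseteq> Y"
  shows "(\<forall>\<mu>'\<in>Kset mul res X' Y' \<phi>.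
            restr X' (F1 mul res X Y X' Y' \<phi> \<mu>') = restr X' (F2 mul res X Y X' Y' \<phi> \<mu>'))
       \<and> (\<forall>\<mu>'\<in>Kset mul res X' Y' \<phi>.
            S1 mul res X Y X' Y' \<phi> (F1 mul res X Y X' Y' \<phi> \<mu>') = \<mu>'
          \<and> S1 mul res X Y X' Y' \<phi> (F2 mul res X Y X' Y' \<phi> \<mu>') = \<mu>'
          \<and> S2 mul res X Y X' Y' \<phi> (F1 mul res X Y X' Y' \<phi> \<mu>') = \<mu>'
          \<and> S2 mul res X Y X' Y' \<phi> (F2 mul res X Y X' Y' \<phi> \<mu>') = \<mu>')"
proof -
  interpret residuated_lattice mul res
    using assms(1) by unfold_locales
  note between = restr_eq_if_between_ext0_F2 S1_eq_if_between_ext0_F2 S2_eq_if_between_ext0_F2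
  show ?thesis
    using between[OF assms(2) _ ext0_le_F1[OF assms(2)] F1_le_F2[OF assms(3)]]
      between[OF assms(2) _ ext0_le_F2[OF assms(2), where Y = Y and Y' = Y'] order_refl]
    by simp
qed

end
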